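(* For all $m,n\in\mathbb{N}$ and every $\boldsymbol{\gamma}\in[0,1)^m$, $\Omega^{\boldsymbol{\gamma}}(m,n)\subset\mathbf{Sing}^{\boldsymbol{\gamma}}_{m,n}(1)$.
   Context: $[0,1)^{m\times n}$ is the set of real $m\times n$ matrices with entries in $[0,1)$. For $\boldsymbol{x}\in\mathbb{R}^n$, $\|\boldsymbol{x}\|=\max_i|x_i|$; for $\boldsymbol{y}\in\mathbb{R}^m$, $\langle\boldsymbol{y}\rangle=\min_{\boldsymbol{p}\in\mathbb{Z}^m}\|\boldsymbol{y}-\boldsymbol{p}\|$. For $\psi:\mathbb{N}\to[0,\infty)$, $W_{m,n}(\psi)$ is the set of pairs $(A,\boldsymbol{\gamma})$ such that $\langle A\boldsymbol{q}-\boldsymbol{\gamma}\rangle<\psi(\|\boldsymbol{q}\|)$ for infinitely many $\boldsymbol{q}\in\mathbb{Z}^n$. "Decreasing" means non-increasing. $\mathcal{D}$ is the set of decreasing $\psi:\mathbb{N}\to[0,\infty)$ with $\sum_{q\ge1}q^{n-1}\psi(q)^m=\infty$; $\Omega(m,n)=\bigcap_{\psi\in\mathcal{D}}W_{m,n}(\psi)$ and $\Omega^{\boldsymbol{\gamma}}(m,n)=\{A:(A,\boldsymbol{\gamma})\in\Omega(m,n)\}$. For a decreasing $\psi:\mathbb{N}\to[0,\infty)$, $A\in[0,1)^{m\times n}$ belongs to $D^{\boldsymbol{\gamma}}_{m,n}(\psi)$ if for all sufficiently large $T$ there exists $\boldsymbol{q}\in\mathbb{Z}^n$ with $\langle A\boldsymbol{q}-\boldsymbol{\gamma}\rangle^m<\psi(T)$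 and $1\le\|\boldsymbol{q}\|^n\le T$. With $\psi_1(T)=T^{-1}$, $\mathbf{Sing}^{\boldsymbol{\gamma}}_{m,n}(1)=\bigcap_{\epsilon>0}D^{\boldsymbol{\gamma}}_{m,n}(\epsilon\psi_1)$. *)

theory Defs
  imports "HOL-Analysis.Analysis"
begin

text \<open>Dimensions m, n are encoded by finite index types 'm, 'n (so m, n >= 1).
  Matrices A in R^{m x n} are elements of real^'n^'m; integer vectors q are int^'n.\<close>

definition unit_cube_vec :: "(real^'m) set" where
  "unit_cube_vec = {g. \<forall>i. 0 \<le> g$i \<and> g$i < 1}"

definition unit_cube_mat :: "(real^'n^'m) set" where
  "unit_cube_mat = {A. \<forall>i j. 0 \<le> A$i$j \<and> A$i$j < 1}"

definition supn :: "real^'k \<Rightarrow> real" where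
  "supn x = Max (range (\<lambda>i. \<bar>x$i\<bar>))"

definition isupn :: "int^'k \<Rightarrow> nat" where
  "isupn q = nat (Max (range (\<lambda>i. \<bar>q$i\<bar>)))"

definition ivec :: "int^'k \<Rightarrow> real^'k" where
  "ivec q = (\<chi> i. real_of_int (q$i))"

definition dist_Z :: "real^'k \<Rightarrow> real" where
  "dist_Z y = (INF p::int^'k. supn (y - ivec p))"

definition decreasing_fn :: "(nat \<Rightarrow> real) \<Rightarrow> bool" where
  "decreasing_fn \<psi> \<longleftrightarrow> (\<forall>a b. 1 \<le> a \<longrightarrow> a \<le> b \<longrightarrow> \<psi> b \<le> \<psi> a)"

definition W_set :: "(nat \<Rightarrow> real) \<Rightarrow> ((real^'n^'m) \<times> (real^'m)) set" where
  "W_set \<psi> = {(A, g). A \<in> unit_cube_mat \<and> g \<in> unit_cube_vec \<and>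
      infinite {q::int^'n. dist_Z (A *v ivec q - g) < \<psi> (isupn q)}}"

definition D_class :: "'n itself \<Rightarrow> 'm itself \<Rightarrow> (nat \<Rightarrow> real) set" where
  "D_class _ _ = {\<psi>. (\<forall>q. 0 \<le> \<psi> q) \<and> decreasing_fn \<psi> \<and>
      \<not> summable (\<lambda>q. real (Suc q) ^ (CARD('n) - 1) * \<psi> (Suc q) ^ CARD('m))}"

definition Omega :: "((real^'n^'m) \<times> (real^'m)) set" where
  "Omega = (\<Inter>\<psi> \<in> D_class TYPE('n) TYPE('m). W_set \<psi>)"

definition Omega_gamma :: "real^'m \<Rightarrow> (real^'n^'m) set" where
  "Omega_gamma g = {A. (A, g) \<in> Omega}"

definition D_gamma :: "real^'m \<Rightarrow> (nat \<Rightarrow> real) \<Rightarrow> (real^'n^'m) set" where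
  "D_gamma g \<psi> = {A. A \<in> unit_cube_mat \<and>
      (\<forall>\<^sub>F T in sequentially. \<exists>q::int^'n.
          dist_Z (A *v ivec q - g) ^ CARD('m) < \<psi> T \<and>
          1 \<le> isupn q ^ CARD('n) \<and> isupn q ^ CARD('n) \<le> T)}"

definition Sing_gamma :: "real^'m \<Rightarrow> (real^'n^'m) set" where
  "Sing_gamma g = (\<Inter>\<epsilon>\<in>{0::real<..}. D_gamma g (\<lambda>T. \<epsilon> * (1 / real T)))"

end

theory Submission
  imports Defs
begin

text \<open>If A is not in Sing(1), there are \<epsilon> > 0 and arbitrarily large T for which no q with
  1 \<le> |q|^n \<le> T has \<langle>A q - \<gamma>\<rangle>^m < \<epsilon>/T. Taking s^n \<le> T < (s+1)^n, such a T yields a scale s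
  at which \<langle>A q - \<gamma>\<rangle>^m \<ge> \<delta>/s^n for all 1 \<le> |q| \<le> s, where \<delta> = \<epsilon>/2^n. Choose such scales
  s_0 < s_1 < ... with s_(k+1) \<ge> 2 s_k and let \<psi>(r)^m = \<delta>/s_(k+1)^n on s_k < r \<le> s_(k+1).
  Then \<psi> is decreasing and \<langle>A q - \<gamma>\<rangle> \<ge> \<psi>(|q|) for every q \<noteq> 0, so (A, \<gamma>) \<notin> W(\<psi>); yet each block
  s_k < r \<le> s_(k+1) contributes at least \<delta>/(2n) to \<Sum> r^(n-1) \<psi>(r)^m, which therefore diverges.\<close>

lemma power_diff_le_mult:
  fixes x y :: real
  assumes "0 \<le> y" "y \<le> x"
  shows "x ^ n - y ^ n \<le> real n * x ^ (n - 1) * (x - y)"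
proof -
  have "(\<Sum>i<n. y ^ (n - Suc i) * x ^ i) \<le> (\<Sum>i<n. x ^ (n - 1))"
  proof (rule sum_mono)
    fix i assume "i \<in> {..<n}"
    have "y ^ (n - Suc i) * x ^ i \<le> x ^ (n - Suc i) * x ^ i"
      using assms by (intro mult_right_mono power_mono) auto
    also have "\<dots> = x ^ (n - 1)"
      using \<open>i \<in> {..<n}\<close> by (simp flip: power_add)
    finally show "y ^ (n - Suc i) * x ^ i \<le> x ^ (n - 1)" .
  qed
  then have "(x - y) * (\<Sum>i<n. y ^ (n - Suc i) * x ^ i) \<le> (x - y) * (real n * x ^ (n - 1))"
    using assms by (intro mult_left_mono) auto
  then show ?thesis
    by (simp add: power_diff_sumr2 algebra_simps)
qed

lemma power_diff_le_sum_powers: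
  fixes a b n :: nat
  assumes "a \<le> b"
  shows "real b ^ n - real a ^ n \<le> real n * (\<Sum>r\<in>{a<..b}. real r ^ (n - 1))"
proof -
  have "real b ^ n - real a ^ n = (\<Sum>r\<in>{a<..b}. real r ^ n - real (r - 1) ^ n)"
    using sum_telescope''[OF assms, of "\<lambda>r. real r ^ n"]
    by (simp add: atLeastSucAtMost_greaterThanAtMost)
  also have "\<dots> \<le> (\<Sum>r\<in>{a<..b}. real n * real r ^ (n - 1))"
  proof (rule sum_mono)
    fix r assume "r \<in> {a<..b}"
    then have "real (r - 1) = real r - 1"
      by auto
    then show "real r ^ n - real (r - 1) ^ n \<le> real n * real r ^ (n - 1)"
      using power_diff_le_mult[of "real (r - 1)" "real r" n] by simp
  qed
  finally show ?thesis
    by (simp add: sum_distrib_left)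
qed

lemma sum_powers_doubling_block_ge:
  fixes a b n :: nat
  assumes "n > 0" "2 * a \<le> b"
  shows "real b ^ n / (2 * real n) \<le> (\<Sum>r\<in>{a<..b}. real r ^ (n - 1))"
proof -
  have "2 * real a ^ n \<le> 2 ^ n * real a ^ n"
    using assms(1) by (intro mult_right_mono) (auto simp: self_le_power)
  also have "\<dots> = (2 * real a) ^ n"
    by (rule power_mult_distrib[symmetric])
  also have "\<dots> \<le> real b ^ n"
    using assms(2) by (intro power_mono) auto
  finally have "real b ^ n / 2 \<le> real n * (\<Sum>r\<in>{a<..b}. real r ^ (n - 1))"
    using power_diff_le_sum_powers[of a b n] assms(2) by simp
  then show ?thesis
    using assms(1) by (simp add: divide_le_eq mult.commute mult.left_commute)
qed

lemma not_summable_blocks: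
  fixes f :: "nat \<Rightarrow> real" and \<sigma> :: "nat \<Rightarrow> nat"
  assumes nonneg: "\<And>r. 0 \<le> f r" and "mono \<sigma>" and "c > 0"
    and block: "\<And>k. c \<le> (\<Sum>r\<in>{\<sigma> k<..\<sigma> (Suc k)}. f r)"
  shows "\<not> summable f"
proof
  assume "summable f"
  obtain K :: nat where "suminf f / c < real K"
    using reals_Archimedean2 by blast
  then have "suminf f < real K * c"
    using \<open>c > 0\<close> by (simp add: pos_divide_less_eq)
  moreover have "real K * c \<le> (\<Sum>r\<in>{\<sigma> 0<..\<sigma> K}. f r)"
  proof (induction K)
    case (Suc K)
    have "{\<sigma> 0<..\<sigma> (Suc K)} = {\<sigma> 0<..\<sigma> K} \<union> {\<sigma> K<..\<sigma> (Suc K)}"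
      using monoD[OF \<open>mono \<sigma>\<close>, of 0 K] monoD[OF \<open>mono \<sigma>\<close>, of K "Suc K"]
      by (intro ivl_disj_un_two(6)[symmetric]) auto
    then show ?case
      using Suc.IH block[of K] by (simp add: sum.union_disjoint ring_distribs)
  qed simp
  moreover have "(\<Sum>r\<in>{\<sigma> 0<..\<sigma> K}. f r) \<le> suminf f"
    using \<open>summable f\<close> nonneg by (intro sum_le_suminf) auto
  ultimately show False
    by linarith
qed

lemma doubling_sequence_exists:
  fixes P :: "nat \<Rightarrow> bool"
  assumes "\<And>N. \<exists>s\<ge>N. P s"
  obtains \<sigma> where "\<And>k. P (\<sigma> k)" "\<And>k. 2 * \<sigma> k \<le> \<sigma> (Suc k)"
proof -
  have "\<exists>\<sigma>. \<forall>k. P (\<sigma> k) \<and> 2 * \<sigma> k \<le> \<sigma> (Suc k)"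
  proof (rule dependent_nat_choice)
    show "\<exists>s. P s"
      using assms by blast
    show "\<exists>t. P t \<and> 2 * s \<le> t" for s
      using assms[of "2 * s"] by blast
  qed
  then show ?thesis
    using that by blast
qed

definition next_scale :: "(nat \<Rightarrow> nat) \<Rightarrow> nat \<Rightarrow> nat" where
  "next_scale \<sigma> r = \<sigma> (LEAST k. r \<le> \<sigma> k)"

lemma next_scale_ge:
  assumes "strict_mono \<sigma>"
  shows "r \<le> next_scale \<sigma> r"
  unfolding next_scale_def
  by (rule LeastI[of _ r]) (use assms strict_mono_imp_increasing in blast)

lemma next_scale_least:
  assumes "strict_mono \<sigma>" "r \<le> \<sigma> k"
  shows "next_scale \<sigma> r \<le> \<sigma> k"
  using assms unfolding next_scale_def by (simp add: Least_le strict_mono_less_eq)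

lemma next_scale_mono:
  assumes "strict_mono \<sigma>" "a \<le> b"
  shows "next_scale \<sigma> a \<le> next_scale \<sigma> b"
  using assms next_scale_ge[OF assms(1), of b] next_scale_least[OF assms(1)]
  unfolding next_scale_def[of _ b] by (meson order_trans)

lemma next_scale_eq:
  assumes "strict_mono \<sigma>" "\<sigma> k < r" "r \<le> \<sigma> (Suc k)"
  shows "next_scale \<sigma> r = \<sigma> (Suc k)"
proof -
  have "(LEAST j. r \<le> \<sigma> j) = Suc k"
  proof (rule Least_equality)
    fix j assume "r \<le> \<sigma> j"
    then have "\<sigma> k < \<sigma> j"
      using assms(2) by linarith
    then show "Suc k \<le> j"
      using assms(1) by (simp add: strict_mono_less Suc_le_eq)
  qed (rule assms(3))
  then show ?thesis
    by (simp add: next_scale_def)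
qed

lemma not_summable_next_scale:
  fixes \<sigma> :: "nat \<Rightarrow> nat"
  assumes "strict_mono \<sigma>" "\<And>k. 2 * \<sigma> k \<le> \<sigma> (Suc k)" "n > 0" "\<delta> > 0"
  shows "\<not> summable (\<lambda>r. real r ^ (n - 1) * (\<delta> / real (next_scale \<sigma> r) ^ n))"
proof (rule not_summable_blocks)
  show "0 \<le> real r ^ (n - 1) * (\<delta> / real (next_scale \<sigma> r) ^ n)" for r
    using assms(4) by simp
  show "mono \<sigma>"
    using assms(1) by (rule strict_mono_mono)
  show "\<delta> / (2 * real n) > 0"
    using assms by simp
  fix k
  let ?s = "real (\<sigma> (Suc k))"
  have "?s > 0"
    using assms(1) strict_monoD[OF assms(1), of k "Suc k"] by simp
  have "\<delta> / (2 * real n) = \<delta> / ?s ^ n * (?s ^ n / (2 * real n))"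
    using \<open>?s > 0\<close> by simp
  also have "\<dots> \<le> \<delta> / ?s ^ n * (\<Sum>r\<in>{\<sigma> k<..\<sigma> (Suc k)}. real r ^ (n - 1))"
    using assms \<open>?s > 0\<close> by (intro mult_left_mono sum_powers_doubling_block_ge) auto
  also have "\<dots> = (\<Sum>r\<in>{\<sigma> k<..\<sigma> (Suc k)}. real r ^ (n - 1) * (\<delta> / real (next_scale \<sigma> r) ^ n))"
    unfolding sum_distrib_left by (intro sum.cong) (auto simp: next_scale_eq[OF assms(1)])
  finally show "\<delta> / (2 * real n) \<le> \<dots>" .
qed

lemma decreasing_divergent_minorant:
  fixes d :: "'q \<Rightarrow> real" and h :: "'q \<Rightarrow> nat"
  assumes "n > 0" "m > 0" "\<delta> > 0" "\<And>q. 0 \<le> d q"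
    and scales: "\<And>N. \<exists>s\<ge>N. s \<ge> 1 \<and> (\<forall>q. 1 \<le> h q \<and> h q \<le> s \<longrightarrow> \<delta> / real s ^ n \<le> d q ^ m)"
  obtains \<psi> where "\<And>r. 0 \<le> \<psi> r" "\<And>a b. a \<le> b \<Longrightarrow> \<psi> b \<le> \<psi> a"
    "\<not> summable (\<lambda>r. real r ^ (n - 1) * \<psi> r ^ m)"
    "\<And>q. 1 \<le> h q \<Longrightarrow> \<psi> (h q) \<le> d q"
proof -
  obtain \<sigma> where good: "\<And>k. \<sigma> k \<ge> 1 \<and> (\<forall>q. 1 \<le> h q \<and> h q \<le> \<sigma> k \<longrightarrow> \<delta> / real (\<sigma> k) ^ n \<le> d q ^ m)"
    and doubling: "\<And>k. 2 * \<sigma> k \<le> \<sigma> (Suc k)"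
    using doubling_sequence_exists[OF scales] by blast
  have "strict_mono \<sigma>"
  proof (unfold strict_mono_Suc_iff, intro allI)
    show "\<sigma> k < \<sigma> (Suc k)" for k
      using good[of k] doubling[of k] by linarith
  qed
  define \<psi> where "\<psi> r = root m (\<delta> / real (next_scale \<sigma> r) ^ n)" for r
  have scale_pos: "real (next_scale \<sigma> r) > 0" for r
    using good[of "LEAST k. r \<le> \<sigma> k"] by (simp add: next_scale_def)
  have \<psi>_power: "\<psi> r ^ m = \<delta> / real (next_scale \<sigma> r) ^ n" for r
    using assms(2,3) scale_pos[of r] by (simp add: \<psi>_def)
  have \<psi>_nonneg: "0 \<le> \<psi> r" for r
    unfolding \<psi>_def using assms(3) scale_pos[of r] by (intro real_root_ge_zero) simp
  show ?thesis
  proof (rule that[of \<psi>])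
    show "0 \<le> \<psi> r" for r
      by (rule \<psi>_nonneg)
    show "\<psi> b \<le> \<psi> a" if "a \<le> b" for a b
    proof -
      have "real (next_scale \<sigma> a) ^ n \<le> real (next_scale \<sigma> b) ^ n"
        using next_scale_mono[OF \<open>strict_mono \<sigma>\<close> that] by (simp add: power_mono)
      then have "\<delta> / real (next_scale \<sigma> b) ^ n \<le> \<delta> / real (next_scale \<sigma> a) ^ n"
        using assms(3) scale_pos by (intro divide_left_mono) auto
      then show ?thesis
        using assms(2) by (simp add: \<psi>_def)
    qed
    show "\<not> summable (\<lambda>r. real r ^ (n - 1) * \<psi> r ^ m)"
      using not_summable_next_scale[of \<sigma> n \<delta>] \<open>strict_mono \<sigma>\<close> doubling assms(1,3) by (simp add: \<psi>_power)
    show "\<psi> (h q) \<le> d q" if "1 \<le> h q" for q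
    proof -
      have "\<psi> (h q) ^ m \<le> d q ^ m"
        using good next_scale_ge[OF \<open>strict_mono \<sigma>\<close>, of "h q"] that
        unfolding \<psi>_power next_scale_def by blast
      then show ?thesis
        using assms(2,4) \<psi>_nonneg by simp
    qed
  qed
qed

lemma nat_root_bracket:
  assumes "n > 0"
  obtains s :: nat where "s ^ n \<le> T" "T < Suc s ^ n"
proof -
  have "Suc T \<le> Suc T ^ n"
    using assms by (simp add: self_le_power)
  then have "T < Suc T ^ n"
    by simp
  moreover have "\<not> T < 0 ^ n"
    using assms by (simp add: zero_power)
  ultimately obtain s where "\<not> T < s ^ n" "T < Suc s ^ n"
    using exists_least_lemma[of "\<lambda>s. T < s ^ n"] by blast
  then show ?thesis
    using that not_less by blast
qed

lemma frequent_failure_imp_scales: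
  fixes d :: "'q \<Rightarrow> real" and h :: "'q \<Rightarrow> nat"
  assumes "n > 0" "\<epsilon> > 0"
    and bad: "\<exists>\<^sub>F T in sequentially.
      \<forall>q. \<not> (d q ^ m < \<epsilon> * (1 / real T) \<and> 1 \<le> h q ^ n \<and> h q ^ n \<le> T)"
  shows "\<exists>s\<ge>N. s \<ge> 1 \<and> (\<forall>q. 1 \<le> h q \<and> h q \<le> s \<longrightarrow> \<epsilon> / 2 ^ n / real s ^ n \<le> d q ^ m)"
proof -
  obtain T where "Suc N ^ n \<le> T"
    and no_q: "\<And>q. \<not> (d q ^ m < \<epsilon> * (1 / real T) \<and> 1 \<le> h q ^ n \<and> h q ^ n \<le> T)"
    using bad unfolding frequently_sequentially by blast
  obtain s where "s ^ n \<le> T" "T < Suc s ^ n"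
    using nat_root_bracket[OF assms(1)] by blast
  have "N < s"
    using power_less_imp_less_base[of "Suc N" n "Suc s"] \<open>Suc N ^ n \<le> T\<close> \<open>T < Suc s ^ n\<close>
    by simp
  have "0 < Suc N ^ n"
    by simp
  then have "0 < T"
    using \<open>Suc N ^ n \<le> T\<close> by (rule less_le_trans)
  then have "real T > 0"
    by simp
  have "real T < 2 ^ n * real s ^ n"
  proof -
    have "real T < real (Suc s) ^ n"
      using \<open>T < Suc s ^ n\<close> by (metis of_nat_less_iff of_nat_power)
    also have "\<dots> \<le> (2 * real s) ^ n"
      using \<open>N < s\<close> by (intro power_mono) auto
    finally show ?thesis
      by (simp add: power_mult_distrib)
  qed
  then have threshold: "\<epsilon> / 2 ^ n / real s ^ n \<le> \<epsilon> * (1 / real T)"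
    using \<open>\<epsilon> > 0\<close> \<open>real T > 0\<close> divide_left_mono[of "real T" "2 ^ n * real s ^ n" \<epsilon>] by simp
  show ?thesis
  proof (intro exI conjI allI impI)
    show "N \<le> s" "1 \<le> s"
      using \<open>N < s\<close> by simp_all
    fix q assume "1 \<le> h q \<and> h q \<le> s"
    then have "1 \<le> h q ^ n" "h q ^ n \<le> T"
      using \<open>s ^ n \<le> T\<close> power_mono[of "h q" s n] by auto
    then show "\<epsilon> / 2 ^ n / real s ^ n \<le> d q ^ m"
      using no_q[of q] threshold by linarith
  qed
qed

lemma dist_Z_nonneg: "0 \<le> dist_Z (y :: real^'k)"
  unfolding dist_Z_def
proof (rule cINF_greatest)
  fix p
  obtain i :: 'k where True
    by blast
  have "\<bar>(y - ivec p) $ i\<bar> \<le> supn (y - ivec p)"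
    unfolding supn_def by (rule Max_ge) auto
  then show "0 \<le> supn (y - ivec p)"
    by linarith
qed simp

lemma isupn_eq_0D: "isupn q = 0 \<Longrightarrow> q = 0"
proof -
  assume "isupn q = 0"
  then have "Max (range (\<lambda>i. \<bar>q $ i\<bar>)) \<le> 0"
    by (simp add: isupn_def)
  moreover have "\<bar>q $ i\<bar> \<le> Max (range (\<lambda>i. \<bar>q $ i\<bar>))" for i
    by (rule Max_ge) auto
  ultimately show "q = 0"
    by (simp add: vec_eq_iff)
qed

lemma const_one_in_D_class: "(\<lambda>_. 1) \<in> D_class TYPE('n) TYPE('m)"
proof -
  have "\<not> summable (\<lambda>q. real (Suc q) ^ (CARD('n) - 1) * 1 ^ CARD('m))"
  proof
    assume "summable (\<lambda>q. real (Suc q) ^ (CARD('n) - 1) * 1 ^ CARD('m))"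
    then have "summable (\<lambda>_. 1 :: real)"
      by (rule summable_comparison_test') simp
    then show False
      by (simp add: summable_const_iff)
  qed
  then show ?thesis
    by (simp add: D_class_def decreasing_fn_def)
qed

lemma not_in_D_gamma_imp_not_in_W:
  fixes A :: "real^'n^'m" and \<gamma> :: "real^'m"
  assumes "A \<in> unit_cube_mat" "\<epsilon> > 0" "A \<notin> D_gamma \<gamma> (\<lambda>T. \<epsilon> * (1 / real T))"
  obtains \<psi> where "\<psi> \<in> D_class TYPE('n) TYPE('m)" "(A, \<gamma>) \<notin> W_set \<psi>"
proof -
  define d where "d q = dist_Z (A *v ivec q - \<gamma>)" for q :: "int^'n"
  have "\<exists>\<^sub>F T in sequentially. \<forall>q. \<not> (d q ^ CARD('m) < \<epsilon> * (1 / real T) \<and>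
      1 \<le> isupn q ^ CARD('n) \<and> isupn q ^ CARD('n) \<le> T)"
    using assms(1,3) by (simp add: D_gamma_def d_def not_eventually)
  then have scales: "\<exists>s\<ge>N. s \<ge> 1 \<and> (\<forall>q. 1 \<le> isupn q \<and> isupn q \<le> s \<longrightarrow>
      \<epsilon> / 2 ^ CARD('n) / real s ^ CARD('n) \<le> d q ^ CARD('m))" for N
    using assms(2) by (intro frequent_failure_imp_scales) auto
  have "0 \<le> d q" for q
    unfolding d_def by (rule dist_Z_nonneg)
  then obtain \<psi> where "\<And>r. 0 \<le> \<psi> r" "\<And>a b. a \<le> b \<Longrightarrow> \<psi> b \<le> \<psi> a"
    and divergent: "\<not> summable (\<lambda>r. real r ^ (CARD('n) - 1) * \<psi> r ^ CARD('m))"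
    and below: "\<And>q. 1 \<le> isupn q \<Longrightarrow> \<psi> (isupn q) \<le> d q"
    using decreasing_divergent_minorant[OF _ _ _ _ scales] assms(2) by auto
  moreover have "\<not> summable (\<lambda>q. real (Suc q) ^ (CARD('n) - 1) * \<psi> (Suc q) ^ CARD('m))"
    using divergent by (subst summable_Suc_iff)
  ultimately have "\<psi> \<in> D_class TYPE('n) TYPE('m)"
    by (simp add: D_class_def decreasing_fn_def)
  moreover have "{q. d q < \<psi> (isupn q)} \<subseteq> {0}"
  proof
    fix q assume "q \<in> {q. d q < \<psi> (isupn q)}"
    then have "\<not> 1 \<le> isupn q"
      using below[of q] by auto
    then show "q \<in> {0}"
      using isupn_eq_0D[of q] by simp
  qed
  then have "(A, \<gamma>) \<notin> W_set \<psi>"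
    by (auto simp: W_set_def d_def dest: finite_subset)
  ultimately show ?thesis
    using that by blast
qed

theorem lemma3p1:
  fixes \<gamma> :: "real^'m"
  assumes "\<gamma> \<in> unit_cube_vec"
  shows "(Omega_gamma \<gamma> :: (real^'n^'m) set) \<subseteq> Sing_gamma \<gamma>"
proof
  fix A :: "real^'n^'m"
  assume "A \<in> Omega_gamma \<gamma>"
  then have in_W: "(A, \<gamma>) \<in> W_set \<psi>" if "\<psi> \<in> D_class TYPE('n) TYPE('m)" for \<psi>
    using that by (auto simp: Omega_gamma_def Omega_def)
  have "A \<in> unit_cube_mat"
    using in_W[OF const_one_in_D_class] by (simp add: W_set_def)
  show "A \<in> Sing_gamma \<gamma>"
    unfolding Sing_gamma_def
  proof (rule INT_I, rule ccontr)
    fix \<epsilon> :: real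
    assume "\<epsilon> \<in> {0<..}" and "A \<notin> D_gamma \<gamma> (\<lambda>T. \<epsilon> * (1 / real T))"
    then obtain \<psi> where "\<psi> \<in> D_class TYPE('n) TYPE('m)" "(A, \<gamma>) \<notin> W_set \<psi>"
      using not_in_D_gamma_imp_not_in_W[OF \<open>A \<in> unit_cube_mat\<close>] by auto
    with in_W show False
      by blast
  qed
qed

end
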